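(* Let $t>0$ be fixed and $x_1>0$. Then the characteristic triangles $\Delta(0,t)$ and $\Delta(x_1,t)$ do not intersect in the open quadrant $(0,\infty)^2$.
   Context: Standing assumptions: $u_0,u_b:[0,\infty)\to\mathbb{R}$ bounded measurable with $u_b>0$; $\rho_0,\rho_b:[0,\infty)\to(0,\infty)$ positive locally bounded measurable. For $x,t,y,\tau\ge0$: $F(y,x,t)=\int_0^y[tu_0(\eta)+\eta-x]\rho_0(\eta)\,d\eta$, $G(\tau,x,t)=\int_0^\tau[x-u_b(\eta)(t-\eta)]\rho_b(\eta)u_b(\eta)\,d\eta$, $F(x,t)=\min_{y\ge0}F(y,x,t)$, $G(x,t)=\min_{\tau\ge0}G(\tau,x,t)$ (minima attained); $y_*\le y^*$ smallest/largest minimizers of $F(\cdot,x,t)$, $\tau_*\le\tau^*$ those of $G(\cdot,x,t)$. Characteristic triangle $\Delta(x,t)$ ($x\ge0,t>0$): (1) if $x>0$, $F(x,t)<G(x,t)$: convex hull of $(x,t),(y_*(x,t),0),(y^*(x,t),0)$; (2) if $F(x,t)>G(x,t)$: convex hull of $(x,t),(0,\tau_*(x,t)),(0,\tau^*(x,t))$; (3) if $F(x,t)=G(x,t)$: convex hull of $(x,t),(y^*(x,t),0),(0,\tau^*(x,t)),(0,0)$; (4) if $x=0$, $F(0,t)<G(0,t)$: convex hull of $(0,t),(0,0),(y^*(0,t),0)$. *)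

theory Defs
  imports "HOL-Analysis.Analysis"
begin

definition Ffun :: "(real \<Rightarrow> real) \<Rightarrow> (real \<Rightarrow> real) \<Rightarrow> real \<Rightarrow> real \<Rightarrow> real \<Rightarrow> real" where
  "Ffun u0 rho0 y x t =
     (LINT \<eta>:{0..y}|lebesgue. (t * u0 \<eta> + \<eta> - x) * rho0 \<eta>)"

definition Gfun :: "(real \<Rightarrow> real) \<Rightarrow> (real \<Rightarrow> real) \<Rightarrow> real \<Rightarrow> real \<Rightarrow> real \<Rightarrow> real" where
  "Gfun ub rhob \<tau> x t =
     (LINT \<eta>:{0..\<tau>}|lebesgue. (x - ub \<eta> * (t - \<eta>)) * rhob \<eta> * ub \<eta>)"

definition Fmin :: "(real \<Rightarrow> real) \<Rightarrow> (real \<Rightarrow> real) \<Rightarrow> real \<Rightarrow> real \<Rightarrow> real" where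
  "Fmin u0 rho0 x t = Inf ((\<lambda>y. Ffun u0 rho0 y x t) ` {0..})"

definition Gmin :: "(real \<Rightarrow> real) \<Rightarrow> (real \<Rightarrow> real) \<Rightarrow> real \<Rightarrow> real \<Rightarrow> real" where
  "Gmin ub rhob x t = Inf ((\<lambda>\<tau>. Gfun ub rhob \<tau> x t) ` {0..})"

definition Fargmin :: "(real \<Rightarrow> real) \<Rightarrow> (real \<Rightarrow> real) \<Rightarrow> real \<Rightarrow> real \<Rightarrow> real set" where
  "Fargmin u0 rho0 x t = {y. 0 \<le> y \<and> (\<forall>z\<ge>0. Ffun u0 rho0 y x t \<le> Ffun u0 rho0 z x t)}"

definition Gargmin :: "(real \<Rightarrow> real) \<Rightarrow> (real \<Rightarrow> real) \<Rightarrow> real \<Rightarrow> real \<Rightarrow> real set" where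
  "Gargmin ub rhob x t = {\<tau>. 0 \<le> \<tau> \<and> (\<forall>s\<ge>0. Gfun ub rhob \<tau> x t \<le> Gfun ub rhob s x t)}"

definition y_low where "y_low u0 rho0 x t = Inf (Fargmin u0 rho0 x t)"
definition y_up  where "y_up u0 rho0 x t = Sup (Fargmin u0 rho0 x t)"
definition tau_low where "tau_low ub rhob x t = Inf (Gargmin ub rhob x t)"
definition tau_up  where "tau_up ub rhob x t = Sup (Gargmin ub rhob x t)"

text \<open>Characteristic triangle Delta(x,t), for x >= 0, t > 0; points are (space, time).\<close>
definition char_triangle ::
  "(real \<Rightarrow> real) \<Rightarrow> (real \<Rightarrow> real) \<Rightarrow> (real \<Rightarrow> real) \<Rightarrow> (real \<Rightarrow> real)
     \<Rightarrow> real \<Rightarrow> real \<Rightarrow> (real \<times> real) set" where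
  "char_triangle u0 ub rho0 rhob x t =
     (let Fv = Fmin u0 rho0 x t; Gv = Gmin ub rhob x t in
      if 0 < x \<and> Fv < Gv then
        convex hull {(x, t), (y_low u0 rho0 x t, 0), (y_up u0 rho0 x t, 0)}
      else if Fv > Gv then
        convex hull {(x, t), (0, tau_low ub rhob x t), (0, tau_up ub rhob x t)}
      else if Fv = Gv then
        convex hull {(x, t), (y_up u0 rho0 x t, 0), (0, tau_up ub rhob x t), (0, 0)}
      else
        convex hull {(0, t), (0, 0), (y_up u0 rho0 0 t, 0)})"

end

theory Submission
  imports Defs
begin

(* Changing x only adds a multiple of a positive density to the integrands:
   F(y,x,t) = F(y,0,t) - x * int_0^y rho0  and  G(tau,x,t) = G(tau,0,t) + x * int_0^tau rhob ub.
   Hence F(x1,t) <= F(0,t) and G(0,t) < G(x1,t), so either Delta(0,t) lies on the axis x = 0,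
   or F(0,t) <= G(0,t), F(x1,t) < G(x1,t) and Delta(x1,t) has its base on the axis t = 0.
   The same identity makes the minimisers of F(.,x,t) nondecreasing in x, so
   y^*(0,t) <= y_*(x1,t); moreover tau^*(0,t) <= t because G(.,0,t) increases beyond t.
   Then Delta(0,t) lies below the line through (0,t) and (y^*(0,t),0), Delta(x1,t) lies to the
   right of the line through (x1,t) and (y_*(x1,t),0), and these two half-planes do not meet in
   the open quadrant. *)

lemma bounded_mult_comp:
  fixes f g :: "'a \<Rightarrow> 'b::real_normed_algebra"
  assumes "bounded (f ` S)" "bounded (g ` S)"
  shows "bounded ((\<lambda>x. f x * g x) ` S)"
proof -
  obtain B C where "\<And>x. x \<in> S \<Longrightarrow> norm (f x) \<le> B" "\<And>x. x \<in> S \<Longrightarrow> norm (g x) \<le> C"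
    using assms by (auto simp: bounded_iff)
  then have "norm (f x * g x) \<le> B * C" if "x \<in> S" for x
    using that by (meson norm_ge_zero norm_mult_ineq mult_mono order_trans)
  then show ?thesis by (auto simp: bounded_iff)
qed

definition loc_bounded_measurable :: "(real \<Rightarrow> real) \<Rightarrow> bool" where
  "loc_bounded_measurable f \<longleftrightarrow>
     f \<in> borel_measurable (lebesgue_on {0..}) \<and> (\<forall>b. bounded (f ` {0..b}))"

lemma loc_bounded_measurable_const: "loc_bounded_measurable (\<lambda>_. c)"
  by (auto simp: loc_bounded_measurable_def image_constant_conv)

lemma loc_bounded_measurable_ident: "loc_bounded_measurable (\<lambda>x. x)"
  by (auto simp: loc_bounded_measurable_def intro: continuous_imp_measurable_on_sets_lebesgue)

lemma loc_bounded_measurable_add: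
  "loc_bounded_measurable f \<Longrightarrow> loc_bounded_measurable g \<Longrightarrow> loc_bounded_measurable (\<lambda>x. f x + g x)"
  by (auto simp: loc_bounded_measurable_def intro: bounded_plus_comp)

lemma loc_bounded_measurable_diff:
  "loc_bounded_measurable f \<Longrightarrow> loc_bounded_measurable g \<Longrightarrow> loc_bounded_measurable (\<lambda>x. f x - g x)"
  by (auto simp: loc_bounded_measurable_def intro: bounded_minus_comp)

lemma loc_bounded_measurable_mult:
  "loc_bounded_measurable f \<Longrightarrow> loc_bounded_measurable g \<Longrightarrow> loc_bounded_measurable (\<lambda>x. f x * g x)"
  by (auto simp: loc_bounded_measurable_def intro: bounded_mult_comp)

lemmas loc_bounded_measurable_intros =
  loc_bounded_measurable_const loc_bounded_measurable_ident loc_bounded_measurable_add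
  loc_bounded_measurable_diff loc_bounded_measurable_mult

lemma loc_bounded_measurableI_bounded:
  assumes "f \<in> borel_measurable (lebesgue_on {0..})" "bounded (f ` {0..})"
  shows "loc_bounded_measurable f"
  using assms bounded_subset[OF assms(2)] by (auto simp: loc_bounded_measurable_def image_mono)

lemma loc_bounded_measurable_integrable:
  assumes "loc_bounded_measurable f" "0 \<le> a"
  shows "integrable (lebesgue_on {a..b}) f"
proof -
  have "{a..b} \<subseteq> {0..}" "{a..b} \<subseteq> {0..b}" using assms(2) by auto
  then have m: "f \<in> borel_measurable (lebesgue_on {a..b})" and "bounded (f ` {a..b})"
    using assms(1) measurable_restrict_mono bounded_subset image_mono
    unfolding loc_bounded_measurable_def by metis+
  then obtain B where B: "\<And>x. x \<in> {a..b} \<Longrightarrow> norm (f x) \<le> B"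
    by (metis bounded_iff imageI)
  show ?thesis
    by (rule measurable_bounded_by_integrable_imp_lebesgue_integrable[OF m, where g = "\<lambda>_. B"])
      (use B in auto)
qed

lemma loc_bounded_measurable_integrable_on:
  "loc_bounded_measurable f \<Longrightarrow> 0 \<le> a \<Longrightarrow> f integrable_on {a..b}"
  by (auto intro: integrable_on_lebesgue_on loc_bounded_measurable_integrable)

lemma loc_bounded_measurable_set_integral:
  assumes "loc_bounded_measurable f"
  shows "(LINT x:{0..y}|lebesgue. f x) = integral {0..y} f"
proof -
  have "set_integrable lebesgue {0..y} f"
    using loc_bounded_measurable_integrable[OF assms order_refl]
    by (simp add: set_integrable_def integrable_restrict_space)
  then show ?thesis by (rule set_lebesgue_integral_eq_integral)
qed

lemma integral_pos_real:
  fixes f :: "real \<Rightarrow> real"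
  assumes f: "integrable (lebesgue_on {a..b}) f" and "a < b"
    and nonneg: "\<And>x. x \<in> {a..b} \<Longrightarrow> 0 \<le> f x" and pos: "\<And>x. x \<in> {a<..<b} \<Longrightarrow> 0 < f x"
  shows "0 < integral {a..b} f"
proof -
  have nonneg_AE: "AE x in lebesgue_on {a..b}. 0 \<le> f x"
    using nonneg by (intro AE_I2) simp
  have Ioo: "{a<..<b} \<in> sets (lebesgue_on {a..b})"
    by (auto simp: sets_restrict_space_iff)
  have "integral\<^sup>L (lebesgue_on {a..b}) f \<noteq> 0"
  proof
    assume "integral\<^sup>L (lebesgue_on {a..b}) f = 0"
    then have "AE x in lebesgue_on {a..b}. f x = 0"
      using integral_nonneg_eq_0_iff_AE[OF f nonneg_AE] by simp
    then have "AE x in lebesgue_on {a..b}. x \<notin> {a<..<b}"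
      by (rule eventually_mono) (use pos in force)
    then have "emeasure (lebesgue_on {a..b}) {a<..<b} = 0"
      using AE_iff_null_sets[OF Ioo] by (simp add: null_setsD1)
    moreover have "emeasure (lebesgue_on {a..b}) {a<..<b} = ennreal (b - a)"
      using \<open>a < b\<close> by (subst emeasure_restrict_space) auto
    ultimately show False using \<open>a < b\<close> by simp
  qed
  moreover have "0 \<le> integral\<^sup>L (lebesgue_on {a..b}) f"
    by (rule integral_nonneg_AE[OF nonneg_AE])
  ultimately show ?thesis
    using lebesgue_integral_eq_integral[OF f] by simp
qed

lemma indefinite_integral_less:
  assumes f: "loc_bounded_measurable f" and "0 \<le> a" "a < b"
    and "\<And>x. x \<in> {a..b} \<Longrightarrow> 0 \<le> f x" "\<And>x. x \<in> {a<..<b} \<Longrightarrow> 0 < f x"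
  shows "integral {0..a} f < integral {0..b} f"
proof -
  have "integral {0..b} f = integral {0..a} f + integral {a..b} f"
    using Henstock_Kurzweil_Integration.integral_combine[of 0 a b f] assms
      loc_bounded_measurable_integrable_on[OF f order_refl]
    by simp
  moreover have "0 < integral {a..b} f"
    using assms by (intro integral_pos_real loc_bounded_measurable_integrable) auto
  ultimately show ?thesis by simp
qed

lemma continuous_on_indefinite_integral:
  "loc_bounded_measurable f \<Longrightarrow> continuous_on {0..M} (\<lambda>y. integral {0..y} f)"
  by (intro indefinite_integral_continuous_1 loc_bounded_measurable_integrable_on) auto

definition nonneg_minimizers :: "(real \<Rightarrow> real) \<Rightarrow> real set" where
  "nonneg_minimizers \<Phi> = {y. 0 \<le> y \<and> (\<forall>z\<ge>0. \<Phi> y \<le> \<Phi> z)}"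

lemma nonneg_minimizers_nonempty_bounded:
  assumes "continuous_on {0..M} \<Phi>" "0 \<le> M" and coercive: "\<And>y. M < y \<Longrightarrow> \<Phi> M < \<Phi> y"
  shows "nonneg_minimizers \<Phi> \<noteq> {}" "nonneg_minimizers \<Phi> \<subseteq> {0..M}"
proof -
  obtain y0 where y0: "y0 \<in> {0..M}" "\<And>y. y \<in> {0..M} \<Longrightarrow> \<Phi> y0 \<le> \<Phi> y"
    using continuous_attains_inf[of "{0..M}" \<Phi>] assms(1,2) by auto
  have "\<Phi> y0 \<le> \<Phi> z" if "0 \<le> z" for z
  proof (cases "z \<le> M")
    case False
    then show ?thesis using y0(2)[of M] coercive[of z] \<open>0 \<le> M\<close> by simp
  qed (use y0 that in auto)
  then show "nonneg_minimizers \<Phi> \<noteq> {}"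
    using y0(1) by (auto simp: nonneg_minimizers_def)
  show "nonneg_minimizers \<Phi> \<subseteq> {0..M}"
  proof
    fix y assume y: "y \<in> nonneg_minimizers \<Phi>"
    then have "\<Phi> y \<le> \<Phi> M" using \<open>0 \<le> M\<close> by (simp add: nonneg_minimizers_def)
    then have "\<not> M < y" using coercive[of y] by linarith
    then show "y \<in> {0..M}" using y by (auto simp: nonneg_minimizers_def)
  qed
qed

lemma Inf_image_nonneg_eq:
  "y \<in> nonneg_minimizers \<Phi> \<Longrightarrow> Inf (\<Phi> ` {0..}) = \<Phi> y"
  by (intro cInf_eq_minimum) (auto simp: nonneg_minimizers_def)

lemma nonneg_minimizers_le:
  assumes "\<And>y. \<Phi>' y = \<Phi> y - \<psi> y" "strict_mono_on {0..} \<psi>"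
    and p: "p \<in> nonneg_minimizers \<Phi>" and q: "q \<in> nonneg_minimizers \<Phi>'"
  shows "p \<le> q"
proof (rule ccontr)
  assume "\<not> p \<le> q"
  then have "\<psi> q < \<psi> p"
    using assms(2) p q by (auto simp: nonneg_minimizers_def strict_mono_on_def)
  moreover have "\<Phi> p \<le> \<Phi> q" "\<Phi>' q \<le> \<Phi>' p"
    using p q by (auto simp: nonneg_minimizers_def)
  ultimately show False using assms(1) by (simp add: algebra_simps)
qed

lemma Inf_image_nonneg_mono:
  assumes "\<And>y. 0 \<le> y \<Longrightarrow> \<Phi>' y \<le> \<Phi> y"
    and "p \<in> nonneg_minimizers \<Phi>" "q \<in> nonneg_minimizers \<Phi>'"
  shows "Inf (\<Phi>' ` {0..}) \<le> Inf (\<Phi> ` {0..})"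
proof -
  have "\<Phi>' q \<le> \<Phi>' p" "\<Phi>' p \<le> \<Phi> p"
    using assms by (auto simp: nonneg_minimizers_def)
  then show ?thesis
    using Inf_image_nonneg_eq[OF assms(2)] Inf_image_nonneg_eq[OF assms(3)] by linarith
qed

lemma Inf_image_nonneg_less:
  assumes "\<And>y. \<Phi>' y = \<Phi> y + \<psi> y" "\<psi> 0 = 0" "\<And>y. 0 < y \<Longrightarrow> 0 < \<psi> y"
    and "0 \<le> s" "\<Phi> s < \<Phi> 0"
    and p: "p \<in> nonneg_minimizers \<Phi>" and q: "q \<in> nonneg_minimizers \<Phi>'"
  shows "Inf (\<Phi> ` {0..}) < Inf (\<Phi>' ` {0..})"
proof -
  have "\<Phi> p < \<Phi>' q"
  proof (cases "q = 0")
    case True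
    have "\<Phi> p \<le> \<Phi> s" using p \<open>0 \<le> s\<close> by (simp add: nonneg_minimizers_def)
    then show ?thesis using True assms(1,2,5) by simp
  next
    case False
    then have "\<Phi> q < \<Phi>' q" using assms(1,3) q by (simp add: nonneg_minimizers_def)
    moreover have "\<Phi> p \<le> \<Phi> q" using p q by (simp add: nonneg_minimizers_def)
    ultimately show ?thesis by simp
  qed
  then show ?thesis
    using Inf_image_nonneg_eq[OF p] Inf_image_nonneg_eq[OF q] by linarith
qed

lemma Inf_Sup_bounds_Icc:
  fixes A :: "real set"
  assumes "A \<noteq> {}" "A \<subseteq> {a..b}"
  shows "a \<le> Inf A" "Inf A \<le> Sup A" "Sup A \<le> b"
proof -
  have "bdd_below A" "bdd_above A"
    using assms(2) by (meson bdd_below_Icc bdd_below_mono, meson bdd_above_Icc bdd_above_mono)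
  with assms show "a \<le> Inf A" "Inf A \<le> Sup A" "Sup A \<le> b"
    by (auto intro!: cInf_greatest cInf_le_cSup cSup_least)
qed

lemma convex_hull_vertical_axis:
  "convex hull {(0::real, a), (0, b), (0, c :: real)} \<subseteq> {0} \<times> UNIV"
  by (intro hull_minimal) (auto intro: convex_Times)

lemma convex_hulls_disjoint_in_quadrant:
  fixes t x Y a b \<tau> :: real
  assumes "0 < t" "0 < x" "0 \<le> Y" "Y \<le> a" "a \<le> b" "\<tau> \<le> t"
  shows "convex hull {(0, t), (Y, 0), (0, \<tau>), (0, 0)} \<inter> convex hull {(x, t), (a, 0), (b, 0)}
           \<inter> ({0<..} \<times> {0<..}) = {}"
proof -
  have left: "convex hull {(0, t), (Y, 0), (0, \<tau>), (0, 0)} \<subseteq> {q. (t, Y) \<bullet> q \<le> Y * t}"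
    by (intro hull_minimal convex_halfspace_le)
      (use assms in \<open>auto simp: inner_prod_def mult_left_mono\<close>)
  have right: "convex hull {(x, t), (a, 0), (b, 0)} \<subseteq> {q. a * t \<le> (t, a - x) \<bullet> q}"
    by (intro hull_minimal convex_halfspace_ge)
      (use assms in \<open>auto simp: inner_prod_def mult_right_mono algebra_simps\<close>)
  have False if "t * p + Y * w \<le> Y * t" "a * t \<le> t * p + (a - x) * w" "0 < p" "0 < w" for p w
  proof -
    have "0 < t * p" using that assms by simp
    then have "0 < Y * (t - w)" using that by (simp add: algebra_simps)
    then have "0 < t - w" using assms(3) by (simp add: zero_less_mult_iff)
    then have "Y * (t - w) \<le> a * (t - w)" using assms(4) by (simp add: mult_right_mono)
    then have "x * w \<le> 0" using that by (simp add: algebra_simps)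
    then show False using that assms by (simp add: mult_le_0_iff)
  qed
  then show ?thesis using left right by (fastforce simp: inner_prod_def)
qed

lemma char_triangle_origin_boundary_case:
  "Gmin ub rhob 0 t < Fmin u0 rho0 0 t \<Longrightarrow> char_triangle u0 ub rho0 rhob 0 t \<subseteq> {0} \<times> UNIV"
  unfolding char_triangle_def Let_def using convex_hull_vertical_axis by simp

lemma char_triangle_origin_subset:
  assumes "\<not> Gmin ub rhob 0 t < Fmin u0 rho0 0 t"
  shows "char_triangle u0 ub rho0 rhob 0 t \<subseteq>
           convex hull {(0, t), (y_up u0 rho0 0 t, 0), (0, tau_up ub rhob 0 t), (0, 0)}"
proof (cases "Fmin u0 rho0 0 t = Gmin ub rhob 0 t")
  case False
  with assms show ?thesis
    unfolding char_triangle_def Let_def by (auto intro!: hull_mono)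
qed (simp add: char_triangle_def)

lemma char_triangle_initial_case:
  "0 < x \<Longrightarrow> Fmin u0 rho0 x t < Gmin ub rhob x t \<Longrightarrow> char_triangle u0 ub rho0 rhob x t =
     convex hull {(x, t), (y_low u0 rho0 x t, 0), (y_up u0 rho0 x t, 0)}"
  unfolding char_triangle_def Let_def by simp

locale initial_boundary_data =
  fixes u0 ub rho0 rhob :: "real \<Rightarrow> real"
  assumes u0: "loc_bounded_measurable u0" and u0_bdd: "bounded (u0 ` {0..})"
    and ub: "loc_bounded_measurable ub" and ub_pos: "\<And>\<eta>. 0 \<le> \<eta> \<Longrightarrow> 0 < ub \<eta>"
    and rho0: "loc_bounded_measurable rho0" and rho0_pos: "\<And>\<eta>. 0 \<le> \<eta> \<Longrightarrow> 0 < rho0 \<eta>"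
    and rhob: "loc_bounded_measurable rhob" and rhob_pos: "\<And>\<eta>. 0 \<le> \<eta> \<Longrightarrow> 0 < rhob \<eta>"
begin

abbreviation F :: "real \<Rightarrow> real \<Rightarrow> real \<Rightarrow> real" where
  "F y x t \<equiv> Ffun u0 rho0 y x t"

abbreviation G :: "real \<Rightarrow> real \<Rightarrow> real \<Rightarrow> real" where
  "G \<tau> x t \<equiv> Gfun ub rhob \<tau> x t"

lemma F_eq_integral: "F y x t = integral {0..y} (\<lambda>\<eta>. (t * u0 \<eta> + \<eta> - x) * rho0 \<eta>)"
  unfolding Ffun_def by (intro loc_bounded_measurable_set_integral loc_bounded_measurable_intros u0 rho0)

lemma G_eq_integral: "G \<tau> x t = integral {0..\<tau>} (\<lambda>\<eta>. (x - ub \<eta> * (t - \<eta>)) * rhob \<eta> * ub \<eta>)"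
  unfolding Gfun_def by (intro loc_bounded_measurable_set_integral loc_bounded_measurable_intros ub rhob)

lemma F_shift: "F y x' t = F y x t - (x' - x) * integral {0..y} rho0"
proof -
  have "F y x' t = integral {0..y} (\<lambda>\<eta>. (t * u0 \<eta> + \<eta> - x) * rho0 \<eta> - (x' - x) * rho0 \<eta>)"
    unfolding F_eq_integral by (rule integral_cong) (simp add: algebra_simps)
  also have "\<dots> = F y x t - (x' - x) * integral {0..y} rho0"
    unfolding F_eq_integral by (subst integral_diff)
      (auto intro!: loc_bounded_measurable_integrable_on loc_bounded_measurable_intros u0 rho0)
  finally show ?thesis .
qed

lemma G_shift: "G \<tau> x' t = G \<tau> x t + (x' - x) * integral {0..\<tau>} (\<lambda>\<eta>. rhob \<eta> * ub \<eta>)"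
proof -
  have "G \<tau> x' t = integral {0..\<tau>}
          (\<lambda>\<eta>. (x - ub \<eta> * (t - \<eta>)) * rhob \<eta> * ub \<eta> + (x' - x) * (rhob \<eta> * ub \<eta>))"
    unfolding G_eq_integral by (rule integral_cong) (simp add: algebra_simps)
  also have "\<dots> = G \<tau> x t + (x' - x) * integral {0..\<tau>} (\<lambda>\<eta>. rhob \<eta> * ub \<eta>)"
    unfolding G_eq_integral by (subst integral_add)
      (auto intro!: loc_bounded_measurable_integrable_on loc_bounded_measurable_intros ub rhob)
  finally show ?thesis .
qed

lemma Fargmin_eq: "Fargmin u0 rho0 x t = nonneg_minimizers (\<lambda>y. F y x t)"
  by (simp add: Fargmin_def nonneg_minimizers_def)

lemma Gargmin_eq: "Gargmin ub rhob x t = nonneg_minimizers (\<lambda>\<tau>. G \<tau> x t)"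
  by (simp add: Gargmin_def nonneg_minimizers_def)

lemma Fargmin_nonempty_bounded:
  assumes "0 \<le> t"
  obtains M where "Fargmin u0 rho0 x t \<noteq> {}" "Fargmin u0 rho0 x t \<subseteq> {0..M}"
proof -
  obtain B where B: "\<And>\<eta>. 0 \<le> \<eta> \<Longrightarrow> \<bar>u0 \<eta>\<bar> \<le> B"
    using u0_bdd by (metis atLeast_iff bounded_iff imageI real_norm_def)
  define M where "M = max 0 (x + t * B + 1)"
  have integrand_pos: "0 < (t * u0 \<eta> + \<eta> - x) * rho0 \<eta>" if "M \<le> \<eta>" for \<eta>
  proof -
    have "0 \<le> \<eta>" "x + t * B + 1 \<le> \<eta>" using that by (auto simp: M_def)
    moreover have "- B \<le> u0 \<eta>" using B[OF \<open>0 \<le> \<eta>\<close>] by linarith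
    then have "- (t * B) \<le> t * u0 \<eta>" using mult_left_mono[OF _ assms] by fastforce
    ultimately show ?thesis using rho0_pos by simp
  qed
  have integrable: "loc_bounded_measurable (\<lambda>\<eta>. (t * u0 \<eta> + \<eta> - x) * rho0 \<eta>)"
    by (intro loc_bounded_measurable_intros u0 rho0)
  have "continuous_on {0..M} (\<lambda>y. F y x t)"
    unfolding F_eq_integral by (rule continuous_on_indefinite_integral[OF integrable])
  moreover have "F M x t < F y x t" if "M < y" for y
    unfolding F_eq_integral using that integrand_pos
    by (intro indefinite_integral_less[OF integrable]) (auto simp: M_def less_imp_le)
  ultimately have "nonneg_minimizers (\<lambda>y. F y x t) \<noteq> {}" "nonneg_minimizers (\<lambda>y. F y x t) \<subseteq> {0..M}"
    using nonneg_minimizers_nonempty_bounded[of M] by (simp_all add: M_def)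
  then show thesis using that by (simp add: Fargmin_eq)
qed

lemma Gargmin_nonempty_bounded:
  assumes "0 \<le> x" "0 \<le> t"
  shows "Gargmin ub rhob x t \<noteq> {}" "Gargmin ub rhob x t \<subseteq> {0..t}"
proof -
  have integrable: "loc_bounded_measurable (\<lambda>\<eta>. (x - ub \<eta> * (t - \<eta>)) * rhob \<eta> * ub \<eta>)"
    by (intro loc_bounded_measurable_intros ub rhob)
  have "continuous_on {0..t} (\<lambda>\<tau>. G \<tau> x t)"
    unfolding G_eq_integral by (rule continuous_on_indefinite_integral[OF integrable])
  moreover have "G t x t < G \<tau> x t" if "t < \<tau>" for \<tau>
    unfolding G_eq_integral
  proof (rule indefinite_integral_less[OF integrable])
    fix \<eta> assume "\<eta> \<in> {t..\<tau>}"
    then have "ub \<eta> * (t - \<eta>) \<le> 0" "0 \<le> \<eta>"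
      using ub_pos[of \<eta>] assms by (auto simp: mult_nonneg_nonpos)
    then show "0 \<le> (x - ub \<eta> * (t - \<eta>)) * rhob \<eta> * ub \<eta>"
      using assms ub_pos rhob_pos by (simp add: less_imp_le)
  next
    fix \<eta> assume "\<eta> \<in> {t<..<\<tau>}"
    then have "ub \<eta> * (t - \<eta>) < 0" "0 \<le> \<eta>"
      using ub_pos[of \<eta>] assms by (auto simp: mult_pos_neg)
    then show "0 < (x - ub \<eta> * (t - \<eta>)) * rhob \<eta> * ub \<eta>"
      using assms ub_pos rhob_pos by simp
  qed (use assms that in auto)
  ultimately have "nonneg_minimizers (\<lambda>\<tau>. G \<tau> x t) \<noteq> {}"
    "nonneg_minimizers (\<lambda>\<tau>. G \<tau> x t) \<subseteq> {0..t}"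
    using nonneg_minimizers_nonempty_bounded[of t] assms by simp_all
  then show "Gargmin ub rhob x t \<noteq> {}" "Gargmin ub rhob x t \<subseteq> {0..t}"
    by (simp_all add: Gargmin_eq)
qed

lemma Fmin_antimono:
  assumes "x \<le> x'" "0 \<le> t"
  shows "Fmin u0 rho0 x' t \<le> Fmin u0 rho0 x t"
proof -
  obtain p q where "p \<in> nonneg_minimizers (\<lambda>y. F y x t)" "q \<in> nonneg_minimizers (\<lambda>y. F y x' t)"
    using Fargmin_nonempty_bounded[OF assms(2)] by (metis Fargmin_eq ex_in_conv)
  moreover have "F y x' t \<le> F y x t" if "0 \<le> y" for y
  proof -
    have "0 \<le> integral {0..y} rho0"
      using rho0 rho0_pos by (intro integral_nonneg loc_bounded_measurable_integrable_on)
        (auto simp: less_imp_le)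
    then show ?thesis using assms(1) by (simp add: F_shift[of y x' t x])
  qed
  ultimately show ?thesis
    unfolding Fmin_def by (intro Inf_image_nonneg_mono)
qed

lemma Gmin_0_less:
  assumes "0 < x" "0 < t"
  shows "Gmin ub rhob 0 t < Gmin ub rhob x t"
proof -
  let ?h = "\<lambda>\<eta>. rhob \<eta> * ub \<eta>"
  have h: "loc_bounded_measurable ?h" by (intro loc_bounded_measurable_intros ub rhob)
  have h_pos: "0 < ?h \<eta>" if "0 \<le> \<eta>" for \<eta> using that ub_pos rhob_pos by simp
  obtain p q where "p \<in> nonneg_minimizers (\<lambda>\<tau>. G \<tau> 0 t)" "q \<in> nonneg_minimizers (\<lambda>\<tau>. G \<tau> x t)"
    using Gargmin_nonempty_bounded(1) assms by (metis Gargmin_eq ex_in_conv less_imp_le order_refl)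
  moreover have "0 < x * integral {0..\<tau>} ?h" if "0 < \<tau>" for \<tau>
    using indefinite_integral_less[OF h order_refl that] h_pos assms(1) by (simp add: less_imp_le)
  moreover have "G t 0 t < G 0 0 t"
  proof -
    let ?k = "\<lambda>\<eta>. ub \<eta> * (t - \<eta>) * rhob \<eta> * ub \<eta>"
    have "0 < integral {0..t} ?k"
    proof (rule integral_pos_real)
      show "integrable (lebesgue_on {0..t}) ?k"
        by (intro loc_bounded_measurable_integrable loc_bounded_measurable_intros ub rhob) simp
    qed (use assms ub_pos rhob_pos in \<open>auto intro!: mult_nonneg_nonneg simp: less_imp_le\<close>)
    moreover have "G t 0 t = integral {0..t} (\<lambda>\<eta>. - ?k \<eta>)"
      unfolding G_eq_integral by (rule integral_cong) simp
    ultimately show ?thesis by (simp add: G_eq_integral)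
  qed
  ultimately show ?thesis
    unfolding Gmin_def using G_shift[of _ x t 0] assms
    by (intro Inf_image_nonneg_less[where \<psi> = "\<lambda>\<tau>. x * integral {0..\<tau>} ?h" and s = t]) simp_all
qed

lemma Fargmin_le:
  assumes "x < x'" "p \<in> Fargmin u0 rho0 x t" "q \<in> Fargmin u0 rho0 x' t"
  shows "p \<le> q"
proof (rule nonneg_minimizers_le)
  show "F y x' t = F y x t - (x' - x) * integral {0..y} rho0" for y
    by (rule F_shift)
  show "strict_mono_on {0..} (\<lambda>y. (x' - x) * integral {0..y} rho0)"
  proof (rule strict_mono_onI)
    fix a b :: real assume "a \<in> {0..}" "a < b"
    then have "integral {0..a} rho0 < integral {0..b} rho0"
      using rho0_pos by (intro indefinite_integral_less[OF rho0]) (auto simp: less_imp_le)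
    then show "(x' - x) * integral {0..a} rho0 < (x' - x) * integral {0..b} rho0"
      using assms(1) by simp
  qed
qed (use assms in \<open>simp_all add: Fargmin_eq\<close>)

lemma y_up_nonneg: "0 \<le> t \<Longrightarrow> 0 \<le> y_up u0 rho0 x t"
  by (metis Fargmin_nonempty_bounded Inf_Sup_bounds_Icc order_trans y_up_def)

lemma y_low_le_y_up: "0 \<le> t \<Longrightarrow> y_low u0 rho0 x t \<le> y_up u0 rho0 x t"
  by (metis Fargmin_nonempty_bounded Inf_Sup_bounds_Icc(2) y_low_def y_up_def)

lemma tau_up_le: "0 \<le> x \<Longrightarrow> 0 \<le> t \<Longrightarrow> tau_up ub rhob x t \<le> t"
  by (metis Gargmin_nonempty_bounded Inf_Sup_bounds_Icc(3) tau_up_def)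

lemma y_up_le_y_low:
  assumes "x < x'" "0 \<le> t"
  shows "y_up u0 rho0 x t \<le> y_low u0 rho0 x' t"
proof -
  have "Fargmin u0 rho0 x t \<noteq> {}" "Fargmin u0 rho0 x' t \<noteq> {}"
    using Fargmin_nonempty_bounded[OF assms(2)] by metis+
  then show ?thesis
    unfolding y_up_def y_low_def using Fargmin_le[OF assms(1)] by (intro cSup_least cInf_greatest)
qed

end

theorem lemma2p10:
  fixes u0 ub rho0 rhob :: "real \<Rightarrow> real" and t x1 :: real
  assumes u0_meas: "u0 \<in> borel_measurable (lebesgue_on {0..})"
    and u0_bdd: "bounded (u0 ` {0..})"
    and ub_meas: "ub \<in> borel_measurable (lebesgue_on {0..})"
    and ub_bdd: "bounded (ub ` {0..})"
    and ub_pos: "\<And>\<eta>. 0 \<le> \<eta> \<Longrightarrow> 0 < ub \<eta>"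
    and rho0_meas: "rho0 \<in> borel_measurable (lebesgue_on {0..})"
    and rho0_pos: "\<And>\<eta>. 0 \<le> \<eta> \<Longrightarrow> 0 < rho0 \<eta>"
    and rho0_locbdd: "\<And>b. bounded (rho0 ` {0..b})"
    and rhob_meas: "rhob \<in> borel_measurable (lebesgue_on {0..})"
    and rhob_pos: "\<And>\<eta>. 0 \<le> \<eta> \<Longrightarrow> 0 < rhob \<eta>"
    and rhob_locbdd: "\<And>b. bounded (rhob ` {0..b})"
    and t_pos: "0 < t"
    and x1_pos: "0 < x1"
  shows "char_triangle u0 ub rho0 rhob 0 t \<inter> char_triangle u0 ub rho0 rhob x1 t
           \<inter> ({0<..} \<times> {0<..}) = {}"
proof -
  have t_nonneg: "0 \<le> t" using t_pos by simp
  have "loc_bounded_measurable u0" "loc_bounded_measurable ub"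
    using u0_meas u0_bdd ub_meas ub_bdd by (simp_all add: loc_bounded_measurableI_bounded)
  moreover have "loc_bounded_measurable rho0" "loc_bounded_measurable rhob"
    using rho0_meas rho0_locbdd rhob_meas rhob_locbdd by (simp_all add: loc_bounded_measurable_def)
  ultimately interpret initial_boundary_data u0 ub rho0 rhob
    using u0_bdd ub_pos rho0_pos rhob_pos by unfold_locales
  show ?thesis
  proof (cases "Gmin ub rhob 0 t < Fmin u0 rho0 0 t")
    case True
    then show ?thesis using char_triangle_origin_boundary_case by fastforce
  next
    case False
    then have "Fmin u0 rho0 x1 t < Gmin ub rhob x1 t"
      using Fmin_antimono[OF less_imp_le[OF x1_pos] t_nonneg] Gmin_0_less[OF x1_pos t_pos] by linarith
    then have "char_triangle u0 ub rho0 rhob x1 t =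
        convex hull {(x1, t), (y_low u0 rho0 x1 t, 0), (y_up u0 rho0 x1 t, 0)}"
      by (rule char_triangle_initial_case[OF x1_pos])
    moreover note char_triangle_origin_subset[OF False]
    moreover note convex_hulls_disjoint_in_quadrant[OF t_pos x1_pos y_up_nonneg[OF t_nonneg]
        y_up_le_y_low[OF x1_pos t_nonneg] y_low_le_y_up[OF t_nonneg] tau_up_le[OF order_refl t_nonneg]]
    ultimately show ?thesis by blast
  qed
qed

end
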